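(* Consider the discrete first-price auction in the model with ties with $n=2$ bidders whose values are drawn independently and uniformly from $X=\{0,1,\dots,x\}$, where $x$ is odd. Then $\beta(v)=\lfloor v/2\rfloor$ is a symmetric equilibrium.
   Context: Model. Two risk-neutral bidders compete for one indivisible object. Values and bids lie in $X=\{0,1,2,\dots,x\}$; each bidder's value is drawn independently and uniformly from $X$. A (pure) strategy is a bidding function $\beta:X\to X$. In the model with ties, the higher bidder wins and, if the two bids are equal, each wins with probability $1/2$. In the first-price auction, a bidder with value $v_i$ bidding $b_i$ gets expected payoff $(v_i-b_i)\Pr(i\text{ wins})$. An equilibrium is a profile of bidding functions such that each bidder's bidding function maximises their expected payoff given the other's (a pure-strategy Bayes–Nash equilibrium) and such that no bidder uses a weakly dominated bidding function (a bidding function is weakly dominated if some other bidding function yields at least as high expected payoff against every opponent bidding function, and strictly higher against some). A symmetric equilibrium is an equilibrium in which both bidders use the same bidding function. *)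

theory Defs
  imports Main "HOL.Real"
begin

text \<open>A bidding function is a map beta : X -> X (represented as nat => nat
  with values on {0..x} lying in {0..x}; values outside X are irrelevant).\<close>

definition bidding_function :: "nat \<Rightarrow> (nat \<Rightarrow> nat) \<Rightarrow> bool" where
  "bidding_function x \<beta> \<longleftrightarrow> (\<forall>v\<in>{0..x}. \<beta> v \<in> {0..x})"

text \<open>Probability that a bid b wins against an opponent using bidding function
  \<beta>o, whose value is uniform on {0..x}; ties are broken by a fair coin.\<close>
definition win_prob :: "nat \<Rightarrow> nat \<Rightarrow> (nat \<Rightarrow> nat) \<Rightarrow> real" where
  "win_prob x b \<beta>o =
     (\<Sum>w\<in>{0..x}. (if \<beta>o w < b then 1 else if \<beta>o w = b then 1/2 else 0)) / real (x + 1)"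

definition interim_payoff :: "nat \<Rightarrow> nat \<Rightarrow> nat \<Rightarrow> (nat \<Rightarrow> nat) \<Rightarrow> real" where
  "interim_payoff x v b \<beta>o = (real v - real b) * win_prob x b \<beta>o"

definition exp_payoff :: "nat \<Rightarrow> (nat \<Rightarrow> nat) \<Rightarrow> (nat \<Rightarrow> nat) \<Rightarrow> real" where
  "exp_payoff x \<beta> \<beta>o = (\<Sum>v\<in>{0..x}. interim_payoff x v (\<beta> v) \<beta>o) / real (x + 1)"

definition best_response :: "nat \<Rightarrow> (nat \<Rightarrow> nat) \<Rightarrow> (nat \<Rightarrow> nat) \<Rightarrow> bool" where
  "best_response x \<beta> \<beta>o \<longleftrightarrow>
     (\<forall>\<beta>'. bidding_function x \<beta>' \<longrightarrow> exp_payoff x \<beta>' \<beta>o \<le> exp_payoff x \<beta> \<beta>o)"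

definition weakly_dominated :: "nat \<Rightarrow> (nat \<Rightarrow> nat) \<Rightarrow> bool" where
  "weakly_dominated x \<beta> \<longleftrightarrow>
     (\<exists>\<beta>'. bidding_function x \<beta>' \<and>
        (\<forall>\<beta>o. bidding_function x \<beta>o \<longrightarrow> exp_payoff x \<beta> \<beta>o \<le> exp_payoff x \<beta>' \<beta>o) \<and>
        (\<exists>\<beta>o. bidding_function x \<beta>o \<and> exp_payoff x \<beta> \<beta>o < exp_payoff x \<beta>' \<beta>o))"

definition equilibrium :: "nat \<Rightarrow> (nat \<Rightarrow> nat) \<Rightarrow> (nat \<Rightarrow> nat) \<Rightarrow> bool" where
  "equilibrium x \<beta>1 \<beta>2 \<longleftrightarrow>
     bidding_function x \<beta>1 \<and> bidding_function x \<beta>2 \<and>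
     best_response x \<beta>1 \<beta>2 \<and> best_response x \<beta>2 \<beta>1 \<and>
     \<not> weakly_dominated x \<beta>1 \<and> \<not> weakly_dominated x \<beta>2"

definition symmetric_equilibrium :: "nat \<Rightarrow> (nat \<Rightarrow> nat) \<Rightarrow> bool" where
  "symmetric_equilibrium x \<beta> \<longleftrightarrow> equilibrium x \<beta> \<beta>"

end

theory Submission
  imports Defs
begin

text \<open>Against an opponent bidding \<open>\<lfloor>w/2\<rfloor>\<close> with \<open>x = 2m+1\<close>, each bid level \<open>k \<le> m\<close> is used
  by exactly two values, so a bid \<open>b\<close> wins with probability \<open>min(2b+1, x+1)/(x+1)\<close>.
  With value \<open>v = 2k + e\<close>, \<open>e \<in> {0,1}\<close>, the payoff \<open>(v - b)(2b+1)\<close> falls short of the payoff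
  at \<open>b = k\<close> by \<open>d(2d + 2e - 1)\<close>, \<open>d = k - b\<close>, which is positive for every integer \<open>d \<noteq> 0\<close>;
  bids above \<open>m\<close> do no better than \<open>m\<close>. So \<open>\<lfloor>v/2\<rfloor>\<close> is the unique best bid at every value,
  which gives both the best-response property and, by comparing against this very
  opponent, that no other bidding function weakly dominates it.\<close>

lemma best_response_if_interim_optimal:
  assumes "\<And>v b. v \<le> x \<Longrightarrow> interim_payoff x v b \<beta>o \<le> interim_payoff x v (\<beta> v) \<beta>o"
  shows "best_response x \<beta> \<beta>o"
  unfolding best_response_def exp_payoff_def
  by (auto intro!: divide_right_mono sum_mono assms)

lemma not_weakly_dominated_if_unique_interim_optimal:
  assumes "bidding_function x \<beta>o"
    and optimal: "\<And>v b. v \<le> x \<Longrightarrow> b \<noteq> \<beta> v \<Longrightarrow>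
                    interim_payoff x v b \<beta>o < interim_payoff x v (\<beta> v) \<beta>o"
  shows "\<not> weakly_dominated x \<beta>"
proof
  assume "weakly_dominated x \<beta>"
  then obtain \<beta>' where
        no_worse: "exp_payoff x \<beta> \<beta>o \<le> exp_payoff x \<beta>' \<beta>o"
    and better: "\<exists>\<beta>o'. exp_payoff x \<beta> \<beta>o' < exp_payoff x \<beta>' \<beta>o'"
    using assms(1) unfolding weakly_dominated_def by blast
  show False
  proof (cases "\<forall>v\<in>{0..x}. \<beta>' v = \<beta> v")
    case True
    then have "exp_payoff x \<beta>' = exp_payoff x \<beta>"
      unfolding exp_payoff_def by (intro ext arg_cong2[where f = "(/)"] sum.cong) auto
    with better show False by simp
  next
    case False
    then obtain v where "v \<le> x" "\<beta>' v \<noteq> \<beta> v" by auto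
    then have "interim_payoff x v (\<beta>' v) \<beta>o < interim_payoff x v (\<beta> v) \<beta>o"
      by (rule optimal)
    moreover have "interim_payoff x u (\<beta>' u) \<beta>o \<le> interim_payoff x u (\<beta> u) \<beta>o"
      if "u \<le> x" for u
      using optimal[OF that] by (cases "\<beta>' u = \<beta> u") (auto intro: less_imp_le)
    ultimately have "(\<Sum>v\<in>{0..x}. interim_payoff x v (\<beta>' v) \<beta>o)
             < (\<Sum>v\<in>{0..x}. interim_payoff x v (\<beta> v) \<beta>o)"
      using \<open>v \<le> x\<close> by (intro sum_strict_mono_ex1) auto
    then have "exp_payoff x \<beta>' \<beta>o < exp_payoff x \<beta> \<beta>o"
      unfolding exp_payoff_def by (simp add: divide_strict_right_mono)
    with no_worse show False by simp
  qed
qed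

lemma sum_odd_atMost_div2:
  fixes f :: "nat \<Rightarrow> 'a::comm_semiring_1"
  shows "(\<Sum>w\<le>2*m+1. f (w div 2)) = (\<Sum>k\<le>m. 2 * f k)"
proof (induction m)
  case 0
  show ?case by (simp add: numeral_2_eq_2 atMost_Suc mult_2)
next
  case (Suc m)
  have "{..2 * Suc m + 1} = insert (2*m+3) (insert (2*m+2) {..2*m+1})" by auto
  moreover have "(2*m+3) div 2 = Suc m" "(2*m+2) div 2 = Suc m" by auto
  ultimately show ?case using Suc by (simp add: atMost_Suc algebra_simps mult_2)
qed

lemma sum_tie_weights:
  "(\<Sum>k\<le>m. 2 * (if k < b then 1 else if k = b then 1/2 else 0 :: real))
     = real (min (2*b+1) (2*m+2))"
  by (induction m) (auto simp: min_def)

lemma win_prob_half_bids: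
  assumes "odd x"
  shows "win_prob x b (\<lambda>w. w div 2) = real (min (2*b+1) (x+1)) / real (x+1)"
proof -
  obtain m where x: "x = 2*m+1" using assms oddE by blast
  show ?thesis
    using sum_odd_atMost_div2[of "\<lambda>k. if k < b then 1 else if k = b then 1/2 else 0 :: real" m]
    unfolding win_prob_def x atLeast0AtMost sum_tie_weights
    by simp
qed

lemma half_bid_payoff_gain:
  fixes v b :: int
  assumes "b \<noteq> v div 2"
  shows "(v - b) * (2*b + 1) < (v - v div 2) * (2 * (v div 2) + 1)"
proof -
  define k where "k = v div 2"
  define d where "d = k - b"
  define e where "e = v - 2*k"
  have e01: "e = 0 \<or> e = 1" unfolding e_def k_def by auto
  have "d \<noteq> 0" using assms unfolding d_def k_def by simp
  then have "0 < d * (2*d + 2*e - 1)"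
    using e01 by (cases "d > 0") (auto intro: mult_pos_pos mult_neg_neg)
  moreover have "(v - k) * (2*k + 1) - (v - b) * (2*b + 1) = d * (2*d + 2*e - 1)"
    unfolding d_def e_def by (simp add: algebra_simps)
  ultimately show ?thesis unfolding k_def by linarith
qed

lemma half_bid_capped_payoff_gain:
  fixes v b m :: nat
  assumes "v \<le> 2*m+1" "b \<noteq> v div 2"
  shows "(int v - int b) * int (min (2*b+1) (2*m+2))
           < (int v - int (v div 2)) * (2 * int (v div 2) + 1)"
proof -
  have half_int: "int (v div 2) = int v div 2" by (simp add: zdiv_int)
  show ?thesis
  proof (cases "b \<le> m")
    case True
    then show ?thesis
      using half_bid_payoff_gain[of "int b" "int v"] assms(2) half_int by (simp add: algebra_simps)
  next
    case False
    then have "min (2*b+1) (2*m+2) = 2*m+2" by simp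
    then have "(int v - int b) * int (min (2*b+1) (2*m+2)) = (int v - int b) * (2 * int m + 2)"
      by simp
    also have "\<dots> \<le> (int v - int m - 1) * (2 * int m + 2)"
      using False by (intro mult_right_mono) auto
    also have "\<dots> < (int v - int m) * (2 * int m + 1)"
      using assms(1) by (simp add: algebra_simps)
    also have "\<dots> \<le> (int v - int (v div 2)) * (2 * int (v div 2) + 1)"
      using half_bid_payoff_gain[of "int m" "int v"] half_int by (cases "m = v div 2") auto
    finally show ?thesis .
  qed
qed

lemma interim_payoff_half_bids_strict:
  assumes "odd x" "v \<le> x" "b \<noteq> v div 2"
  shows "interim_payoff x v b (\<lambda>w. w div 2) < interim_payoff x v (v div 2) (\<lambda>w. w div 2)"
proof -
  obtain m where x: "x = 2*m+1" using assms(1) oddE by blast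
  have "v div 2 \<le> m" using assms(2) x by simp
  then have min_half: "min (2 * (v div 2) + 1) (2*m+2) = 2 * (v div 2) + 1" by simp
  have "(int v - int b) * int (min (2*b+1) (2*m+2))
          < (int v - int (v div 2)) * (2 * int (v div 2) + 1)"
    using half_bid_capped_payoff_gain assms(2,3) x by simp
  then have "real_of_int ((int v - int b) * int (min (2*b+1) (2*m+2)))
          < real_of_int ((int v - int (v div 2)) * (2 * int (v div 2) + 1))"
    by (simp only: of_int_less_iff)
  then have "(real v - real b) * real (min (2*b+1) (2*m+2))
               < (real v - real (v div 2)) * real (min (2 * (v div 2) + 1) (2*m+2))"
    unfolding min_half by (simp add: algebra_simps)
  moreover have "interim_payoff x v c (\<lambda>w. w div 2)
                   = (real v - real c) * real (min (2*c+1) (x+1)) / real (x+1)" for c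
    by (simp add: interim_payoff_def win_prob_half_bids[OF assms(1)])
  ultimately show ?thesis
    using x by (simp add: divide_strict_right_mono)
qed

theorem proposition6:
  fixes x :: nat
  assumes "odd x"
  shows "symmetric_equilibrium x (\<lambda>v. v div 2)"
proof -
  let ?\<beta> = "\<lambda>v::nat. v div 2"
  have bidding: "bidding_function x ?\<beta>" by (auto simp: bidding_function_def)
  have strict: "interim_payoff x v b ?\<beta> < interim_payoff x v (?\<beta> v) ?\<beta>"
    if "v \<le> x" "b \<noteq> ?\<beta> v" for v b
    using interim_payoff_half_bids_strict[OF assms that] .
  have "best_response x ?\<beta> ?\<beta>"
    using strict by (intro best_response_if_interim_optimal) (metis order.refl less_imp_le)
  moreover have "\<not> weakly_dominated x ?\<beta>"
    using bidding strict by (rule not_weakly_dominated_if_unique_interim_optimal)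
  ultimately show ?thesis
    unfolding symmetric_equilibrium_def equilibrium_def using bidding by blast
qed

end
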